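(* Let $\mathrm{E}$ be a law of the form $\mathrm{x}\simeq\mathrm{x}\diamond f(\mathrm{x},\mathrm{y},\mathrm{z})$, for some word $f$ in $\mathrm{x},\mathrm{y},\mathrm{z}$, which implies $\mathrm{x}\diamond\mathrm{y}\simeq(\mathrm{x}\diamond\mathrm{y})\diamond\mathrm{y}$. Two irreducible words $w,w'\in M_X$ satisfy $w\sim_{\mathrm{E}}w'$ if and only if either they are the same letter of $X$, or $w=w_1\diamond w_2$ and $w'=w_1'\diamond w_2'$ with $w_1\sim_{\mathrm{E}}w_1'$ and $w_2\sim_{\mathrm{E}}w_2'$.
   Context: $M_X$ is the set of words of the free magma on an alphabet $X$. $u\sim_{\mathrm{E}}u'$ means the law $u\simeq u'$ holds in every magma satisfying $\mathrm{E}$. For words $u,u'$, $u'\to_{\mathrm{E}}u$ means $u\sim_{\mathrm{E}}u''\diamond u'$ for some word $u''$ (equivalently, under the hypotheses, $u\sim_{\mathrm{E}}u\diamond u'$). A word is irreducible if it is not of the form $w_1\diamond w_2$ with $w_2\to_{\mathrm{E}}w_1$. *)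

theory Defs
  imports Main
begin

datatype 'a mw = Leaf 'a | Op "'a mw" "'a mw"

datatype var = Vx | Vy | Vz

fun eval :: "('m \<Rightarrow> 'm \<Rightarrow> 'm) \<Rightarrow> ('v \<Rightarrow> 'm) \<Rightarrow> 'v mw \<Rightarrow> 'm" where
  "eval op \<rho> (Leaf v) = \<rho> v"
| "eval op \<rho> (Op u w) = op (eval op \<rho> u) (eval op \<rho> w)"

definition magma_on :: "'m set \<Rightarrow> ('m \<Rightarrow> 'm \<Rightarrow> 'm) \<Rightarrow> bool" where
  "magma_on S op \<longleftrightarrow> (\<forall>a\<in>S. \<forall>b\<in>S. op a b \<in> S)"

definition satisfies :: "'m set \<Rightarrow> ('m \<Rightarrow> 'm \<Rightarrow> 'm) \<Rightarrow> 'v mw \<Rightarrow> 'v mw \<Rightarrow> bool" where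
  "satisfies S op u u' \<longleftrightarrow> (\<forall>\<rho>. range \<rho> \<subseteq> S \<longrightarrow> eval op \<rho> u = eval op \<rho> u')"

definition E_lhs :: "var mw" where "E_lhs = Leaf Vx"
definition E_rhs :: "var mw \<Rightarrow> var mw" where "E_rhs f = Op (Leaf Vx) f"

(* Magmas are taken with carrier a subset of the (infinite) type 'a mw; by
   Birkhoff this universe is large enough (relatively free magmas on X embed). *)
definition simE :: "var mw \<Rightarrow> 'a mw \<Rightarrow> 'a mw \<Rightarrow> bool" where
  "simE f u u' \<longleftrightarrow>
     (\<forall>(S :: 'a mw set) op. magma_on S op \<and> satisfies S op E_lhs (E_rhs f)
        \<longrightarrow> satisfies S op u u')"

definition E_implies_right_absorb :: "var mw \<Rightarrow> 'a itself \<Rightarrow> bool" where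
  "E_implies_right_absorb f (_ :: 'a itself) \<longleftrightarrow>
     (\<forall>(S :: 'a mw set) op. magma_on S op \<and> satisfies S op E_lhs (E_rhs f)
        \<longrightarrow> satisfies S op (Op (Leaf Vx) (Leaf Vy)) (Op (Op (Leaf Vx) (Leaf Vy)) (Leaf Vy)))"

definition reducesE :: "var mw \<Rightarrow> 'a mw \<Rightarrow> 'a mw \<Rightarrow> bool" where
  "reducesE f u' u \<longleftrightarrow> (\<exists>u''. simE f u (Op u'' u'))"

definition irreducibleE :: "var mw \<Rightarrow> 'a mw \<Rightarrow> bool" where
  "irreducibleE f w \<longleftrightarrow> \<not> (\<exists>w1 w2. w = Op w1 w2 \<and> reducesE f w2 w1)"

end

theory Submission
  imports Defs
begin

text \<open>
  The words themselves form a model of E under the operation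
  u \<cdot> v = u if u \<diamond> v \<sim>_E u, and u \<cdot> v = u \<diamond> v otherwise.
  Evaluating a word w in this model yields a normal form nf w with nf w \<sim>_E w,
  and since the model satisfies E, equivalent words have equal normal forms;
  hence w \<sim>_E w' iff nf w = nf w'. For an irreducible product w1 \<diamond> w2
  the operation does not collapse, so nf (w1 \<diamond> w2) = nf w1 \<diamond> nf w2,
  and the theorem follows by comparing normal forms.
\<close>

lemma simE_refl: "simE f u u"
  by (simp add: simE_def satisfies_def)

lemma simE_sym: "simE f u v \<Longrightarrow> simE f v u"
  unfolding simE_def satisfies_def by metis

lemma simE_trans: "simE f u v \<Longrightarrow> simE f v w \<Longrightarrow> simE f u w"
  unfolding simE_def satisfies_def by metis

lemma simE_Op_cong: "simE f u u' \<Longrightarrow> simE f v v' \<Longrightarrow> simE f (Op u v) (Op u' v')"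
  unfolding simE_def satisfies_def by simp

lemma eval_eval_Op: "eval op \<sigma> (eval Op \<rho> t) = eval op (\<lambda>v. eval op \<sigma> (\<rho> v)) t"
  by (induction t) auto

lemma eval_Op_Leaf [simp]: "eval Op Leaf u = u"
  by (induction u) auto

lemma eval_in_magma: "magma_on S op \<Longrightarrow> range \<sigma> \<subseteq> S \<Longrightarrow> eval op \<sigma> u \<in> S"
  by (induction u) (auto simp: magma_on_def)

lemma simE_instance:
  fixes \<rho> :: "var \<Rightarrow> 'a mw"
  shows "simE f (eval Op \<rho> E_lhs) (eval Op \<rho> (E_rhs f))"
  unfolding simE_def satisfies_def
proof (intro allI impI, elim conjE)
  fix S :: "'a mw set" and op and \<sigma> :: "'a \<Rightarrow> 'a mw"
  assume "magma_on S op" and E: "\<forall>\<tau>. range \<tau> \<subseteq> S \<longrightarrow> eval op \<tau> E_lhs = eval op \<tau> (E_rhs f)"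
    and "range \<sigma> \<subseteq> S"
  then have "range (\<lambda>v. eval op \<sigma> (\<rho> v)) \<subseteq> S"
    using eval_in_magma by blast
  with E show "eval op \<sigma> (eval Op \<rho> E_lhs) = eval op \<sigma> (eval Op \<rho> (E_rhs f))"
    by (simp only: eval_eval_Op)
qed

lemma simE_Op_absorb: "simE f (Op u (eval Op \<rho> f)) u" if "\<rho> Vx = u"
  using simE_instance[of f \<rho>] that by (simp add: E_lhs_def E_rhs_def simE_sym)

definition nf_op :: "var mw \<Rightarrow> 'a mw \<Rightarrow> 'a mw \<Rightarrow> 'a mw" where
  "nf_op f u v = (if simE f (Op u v) u then u else Op u v)"

definition nf :: "var mw \<Rightarrow> 'a mw \<Rightarrow> 'a mw" where
  "nf f = eval (nf_op f) Leaf"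

lemma simE_nf_op: "simE f (nf_op f u v) (Op u v)"
  by (simp add: nf_op_def simE_refl simE_sym)

lemma simE_eval_nf_op: "simE f (eval (nf_op f) \<rho> t) (eval Op \<rho> t)"
proof (induction t)
  case (Leaf x)
  show ?case by (simp add: simE_refl)
next
  case (Op t1 t2)
  then show ?case
    using simE_nf_op simE_Op_cong simE_trans by fastforce
qed

lemma satisfies_nf_op: "satisfies (UNIV :: 'a mw set) (nf_op f) E_lhs (E_rhs f)"
  unfolding satisfies_def
proof (intro allI impI)
  fix \<rho> :: "var \<Rightarrow> 'a mw"
  have "simE f (Op (\<rho> Vx) (eval (nf_op f) \<rho> f)) (Op (\<rho> Vx) (eval Op \<rho> f))"
    using simE_eval_nf_op simE_Op_cong simE_refl by blast
  then have "simE f (Op (\<rho> Vx) (eval (nf_op f) \<rho> f)) (\<rho> Vx)"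
    using simE_Op_absorb simE_trans by blast
  then show "eval (nf_op f) \<rho> E_lhs = eval (nf_op f) \<rho> (E_rhs f)"
    by (simp add: E_lhs_def E_rhs_def nf_op_def)
qed

lemma nf_Leaf [simp]: "nf f (Leaf a) = Leaf a"
  by (simp add: nf_def)

lemma simE_nf: "simE f (nf f w) w"
  using simE_eval_nf_op[of f Leaf w] by (simp add: nf_def)

lemma nf_Op: "\<not> simE f (Op u v) u \<Longrightarrow> nf f (Op u v) = Op (nf f u) (nf f v)"
proof -
  assume no_collapse: "\<not> simE f (Op u v) u"
  have "simE f (Op u v) (Op (nf f u) (nf f v))"
    using simE_nf simE_sym simE_Op_cong by blast
  then have "\<not> simE f (Op (nf f u) (nf f v)) (nf f u)"
    using no_collapse simE_nf simE_trans by blast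
  then show ?thesis
    by (simp add: nf_def nf_op_def)
qed

lemma simE_iff_nf_eq: "simE f w w' \<longleftrightarrow> nf f w = nf f w'"
proof
  assume "simE f w w'"
  moreover have "magma_on (UNIV :: 'a mw set) (nf_op f)"
    by (simp add: magma_on_def)
  ultimately have "satisfies (UNIV :: 'a mw set) (nf_op f) w w'"
    using satisfies_nf_op unfolding simE_def by blast
  then show "nf f w = nf f w'"
    by (simp add: satisfies_def nf_def)
next
  assume "nf f w = nf f w'"
  then show "simE f w w'"
    by (metis simE_nf simE_sym simE_trans)
qed

lemma not_simE_Op_if_irreducible: "irreducibleE f (Op u v) \<Longrightarrow> \<not> simE f (Op u v) u"
  unfolding irreducibleE_def reducesE_def by (blast dest: simE_sym)

theorem mainTheorem12:
  fixes f :: "var mw" and w w' :: "'a mw"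
  assumes "E_implies_right_absorb f TYPE('a)"
    and "irreducibleE f w" and "irreducibleE f w'"
  shows "simE f w w' \<longleftrightarrow>
           ((\<exists>a. w = Leaf a \<and> w' = Leaf a) \<or>
            (\<exists>w1 w2 w1' w2'. w = Op w1 w2 \<and> w' = Op w1' w2' \<and>
                simE f w1 w1' \<and> simE f w2 w2'))"
proof -
  have nf_irreducible: "nf f (Op u v) = Op (nf f u) (nf f v)" if "irreducibleE f (Op u v)" for u v
    using that by (simp add: nf_Op not_simE_Op_if_irreducible)
  show ?thesis
    using assms(2,3) by (cases w; cases w') (auto simp: simE_iff_nf_eq nf_irreducible)
qed

end
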